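(* Let $n\ge1$, let $\sigma\in S_n$ have $d$ descents, and for $i,j\ge0$ let $c_{ij}^d$ be the number of ordered pairs $(\tau,\mu)\in S_n\times S_n$ such that $\tau$ has $i$ descents, $\mu$ has $j$ descents, and $\tau\mu=\sigma$. Then, as formal power series in $s,t$, $$\sum_{i,j\ge0}\frac{c_{ij}^d\,s^{i+1}t^{j+1}}{(1-s)^{n+1}(1-t)^{n+1}}=\sum_{a,b\ge0}\binom{n+ab-d-1}{n}s^at^b.$$ (In particular $c_{ij}^d$ depends on $\sigma$ only through $d$.)
   Context: For $\sigma\in S_n$, $\sigma$ has a descent at $i$ ($1\le i\le n-1$) if $\sigma(i+1)<\sigma(i)$. Binomial convention: $\binom{m}{n}=\frac{m(m-1)\cdots(m-n+1)}{n!}$ if $m\ge n$ and $\binom{m}{n}=0$ if $m<n$ (including negative $m$). *)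

theory Defs
  imports "HOL-Combinatorics.Permutations" "HOL-Computational_Algebra.Formal_Power_Series"
begin

definition des :: "nat \<Rightarrow> (nat \<Rightarrow> nat) \<Rightarrow> nat" where
  "des n \<sigma> = card {i \<in> {1..n-1}. \<sigma> (i+1) < \<sigma> i}"

text \<open>Binomial coefficient with the paper's convention: zero when m < k (including negative m).\<close>
definition binom :: "int \<Rightarrow> nat \<Rightarrow> int" where
  "binom m k = (if int k \<le> m then int (nat m choose k) else 0)"

definition cnt :: "nat \<Rightarrow> (nat \<Rightarrow> nat) \<Rightarrow> nat \<Rightarrow> nat \<Rightarrow> nat" where
  "cnt n \<sigma> i j = card {(\<tau>, \<mu>). \<tau> permutes {1..n} \<and> \<mu> permutes {1..n} \<and>
      des n \<tau> = i \<and> des n \<mu> = j \<and> \<tau> \<circ> \<mu> = \<sigma>}"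

text \<open>Bivariate formal power series in s, t: outer variable s, inner variable t.\<close>
definition fps_s :: "real fps fps" where "fps_s = fps_X"
definition fps_t :: "real fps fps" where "fps_t = fps_const fps_X"

end

theory Submission
  imports Defs "HOL-Library.Infinite_Set"
begin

text \<open>
  Proof by compatible sequences (Gessel's method).  For a permutation p of {1..n}, call a
  sequence x on positions 1..n with values below m compatible with p if it is weakly increasing
  and strictly increasing at every descent of p.  Two facts drive the theorem:

  (1) stars and bars: there are binom(m + n - 1 - des p, n) such sequences, so their generating
      series over m is s^(des p + 1) / (1 - s)^(n+1);
  (2) merging: for sigma = tau o mu, the pairs (v, u) of a tau-compatible v below a and a
      mu-compatible u below b correspond bijectively, via i \<mapsto> a * u i + v (mu i), to the
      sigma-compatible sequences below a * b, taken over all factorizations of sigma.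

  Comparing coefficients of s^a t^b then gives the identity.
\<close>

section \<open>Ranks\<close>

definition rank :: "'a set \<Rightarrow> ('a \<Rightarrow> 'b::linorder) \<Rightarrow> 'a \<Rightarrow> nat" where
  "rank S l i = card {j\<in>S. l j < l i}"

lemma rank_less_iff:
  assumes "finite S" "i \<in> S" "i' \<in> S"
  shows "rank S l i < rank S l i' \<longleftrightarrow> l i < l i'"
proof
  assume "l i < l i'"
  hence "{j\<in>S. l j < l i} \<subset> {j\<in>S. l j < l i'}" using assms(2) by auto
  thus "rank S l i < rank S l i'" unfolding rank_def using assms(1) by (intro psubset_card_mono) auto
next
  assume less: "rank S l i < rank S l i'"
  show "l i < l i'"
  proof (rule ccontr)
    assume "\<not> l i < l i'"
    hence "{j\<in>S. l j < l i'} \<subseteq> {j\<in>S. l j < l i}" by auto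
    hence "rank S l i' \<le> rank S l i" unfolding rank_def using assms(1) by (intro card_mono) auto
    thus False using less by simp
  qed
qed

lemma rank_bij:
  assumes fin: "finite S" and inj: "inj_on l S"
  shows "bij_betw (rank S l) S {..<card S}"
proof -
  have inj_rank: "inj_on (rank S l) S"
  proof (rule inj_onI)
    fix i i' assume i: "i \<in> S" and i': "i' \<in> S" and "rank S l i = rank S l i'"
    hence "l i = l i'" using rank_less_iff[OF fin i i', of l] rank_less_iff[OF fin i' i, of l] by auto
    thus "i = i'" using inj i i' by (auto dest: inj_onD)
  qed
  have "rank S l i < card S" if "i \<in> S" for i
  proof -
    have "{j\<in>S. l j < l i} \<subset> S" using that by auto
    thus ?thesis unfolding rank_def using fin by (intro psubset_card_mono) auto
  qed
  hence "rank S l ` S \<subseteq> {..<card S}" by auto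
  moreover have "card (rank S l ` S) = card {..<card S}" using card_image[OF inj_rank] by simp
  ultimately show ?thesis
    unfolding bij_betw_def using inj_rank by (simp add: card_subset_eq)
qed

lemma rank_unique:
  assumes fin: "finite S"
    and iso: "\<And>i i'. i \<in> S \<Longrightarrow> i' \<in> S \<Longrightarrow> f i < f i' \<longleftrightarrow> l i < l i'"
    and img: "f ` S = {..<card S}" and i: "i \<in> S"
  shows "f i = rank S l i"
proof -
  have inj: "inj_on f S" using img fin by (simp add: eq_card_imp_inj_on)
  have "rank S l i = card {j\<in>S. f j < f i}" unfolding rank_def using iso i by (metis (lifting))
  also have "\<dots> = card (f ` {j\<in>S. f j < f i})"
    by (rule card_image[symmetric]) (rule inj_on_subset[OF inj], auto)
  also have "f ` {j\<in>S. f j < f i} = {..<f i}"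
  proof (intro equalityI subsetI)
    fix k assume "k \<in> {..<f i}"
    moreover have "f i < card S" using img i by auto
    ultimately have "k \<in> f ` S" using img by auto
    thus "k \<in> f ` {j\<in>S. f j < f i}" using \<open>k \<in> {..<f i}\<close> by auto
  qed auto
  finally show ?thesis by simp
qed

text \<open>Strictly increasing maps with the same image agree: the value at i is the element of
  the image whose rank is the rank of i.\<close>
lemma strict_mono_on_image_eq:
  fixes f g :: "'a::linorder \<Rightarrow> 'b::linorder"
  assumes fin: "finite A" and f: "strict_mono_on A f" and g: "strict_mono_on A g"
    and img: "f ` A = g ` A" and i: "i \<in> A"
  shows "f i = g i"
proof -
  have rank_image: "rank (h ` A) id (h i) = rank A id i" if h: "strict_mono_on A h" for h
  proof -
    have "{s \<in> h ` A. s < h i} = h ` {j\<in>A. j < i}"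
      using strict_mono_on_less[OF h] i by auto
    moreover have "inj_on h {j\<in>A. j < i}"
      using strict_mono_on_imp_inj_on[OF h] by (rule inj_on_subset) auto
    ultimately show ?thesis unfolding rank_def by (simp add: card_image)
  qed
  have "rank (f ` A) id (f i) = rank (f ` A) id (g i)"
    using rank_image[OF f] rank_image[OF g] img by simp
  moreover have "bij_betw (rank (f ` A) id) (f ` A) {..<card (f ` A)}"
    using fin by (intro rank_bij) auto
  ultimately show ?thesis
    using i img by (auto simp: bij_betw_def dest: inj_onD)
qed

section \<open>Permutations ordered like a labelling\<close>

lemma permutes_mem: "p permutes S \<Longrightarrow> x \<in> S \<Longrightarrow> p x \<in> S"
  by (simp add: permutes_in_image)

lemma image_pred_atLeastAtMost: "(\<lambda>k. k - 1) ` {1..n} = {..<n::nat}"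
  unfolding image_Suc_lessThan[symmetric] image_image by simp

text \<open>Every injective labelling of {1..n} is ordered like some permutation of {1..n}, namely
  i \<mapsto> 1 + rank of i; by the next lemma this permutation is unique.\<close>
lemma order_permutation_exists:
  fixes l :: "nat \<Rightarrow> 'b::linorder"
  assumes inj: "inj_on l {1..n}"
  obtains \<mu> where "\<mu> permutes {1..n}"
    and "\<And>i i'. i \<in> {1..n} \<Longrightarrow> i' \<in> {1..n} \<Longrightarrow> \<mu> i < \<mu> i' \<longleftrightarrow> l i < l i'"
proof
  let ?S = "{1..n}"
  define \<mu> where "\<mu> i = (if i \<in> ?S then Suc (rank ?S l i) else i)" for i
  have "bij_betw (Suc \<circ> rank ?S l) ?S ?S"
  proof (rule bij_betw_trans)
    show "bij_betw (rank ?S l) ?S {..<n}" using rank_bij[OF _ inj] by simp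
    show "bij_betw Suc {..<n} ?S" by (simp add: bij_betw_def image_Suc_lessThan)
  qed
  hence "bij_betw \<mu> ?S ?S" by (rule bij_betw_cong[THEN iffD1, rotated]) (simp add: \<mu>_def)
  thus "\<mu> permutes ?S" by (rule bij_imp_permutes) (auto simp: \<mu>_def)
  show "\<mu> i < \<mu> i' \<longleftrightarrow> l i < l i'" if "i \<in> ?S" "i' \<in> ?S" for i i'
    using rank_less_iff[of ?S i i' l] that by (simp add: \<mu>_def)
qed

lemma order_permutation_unique:
  fixes l :: "nat \<Rightarrow> 'b::linorder"
  assumes \<mu>: "\<mu> permutes {1..n::nat}" and \<mu>': "\<mu>' permutes {1..n}"
    and iso: "\<And>i i'. i \<in> {1..n} \<Longrightarrow> i' \<in> {1..n} \<Longrightarrow> \<mu> i < \<mu> i' \<longleftrightarrow> l i < l i'"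
    and iso': "\<And>i i'. i \<in> {1..n} \<Longrightarrow> i' \<in> {1..n} \<Longrightarrow> \<mu>' i < \<mu>' i' \<longleftrightarrow> l i < l i'"
  shows "\<mu> = \<mu>'"
proof
  have pred_rank: "\<pi> i - 1 = rank {1..n} l i"
    if \<pi>: "\<pi> permutes {1..n}"
      and iso: "\<And>i i'. i \<in> {1..n} \<Longrightarrow> i' \<in> {1..n} \<Longrightarrow> \<pi> i < \<pi> i' \<longleftrightarrow> l i < l i'"
      and i: "i \<in> {1..n}" for \<pi> i
  proof (rule rank_unique[where f = "\<lambda>i. \<pi> i - 1"])
    have "(\<lambda>i. \<pi> i - 1) ` {1..n} = (\<lambda>k. k - 1) ` (\<pi> ` {1..n})" by (simp only: image_image)
    also have "\<dots> = {..<n}" by (simp only: permutes_image[OF \<pi>] image_pred_atLeastAtMost)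
    finally show "(\<lambda>i. \<pi> i - 1) ` {1..n} = {..<card {1..n}}" by simp
    fix j j' assume "j \<in> {1..n}" "j' \<in> {1..n}"
    moreover from this have "1 \<le> \<pi> j" "1 \<le> \<pi> j'"
      using permutes_mem[OF \<pi>] by fastforce+
    ultimately show "\<pi> j - 1 < \<pi> j' - 1 \<longleftrightarrow> l j < l j'" using iso by (simp add: less_diff_iff)
  qed (use i in auto)
  fix i show "\<mu> i = \<mu>' i"
  proof (cases "i \<in> {1..n}")
    case True
    have "1 \<le> \<mu> i" "1 \<le> \<mu>' i"
      using permutes_mem[OF \<mu>] permutes_mem[OF \<mu>'] True by fastforce+
    thus ?thesis using pred_rank[OF \<mu> iso True] pred_rank[OF \<mu>' iso' True] by linarith
  qed (simp add: permutes_not_in[OF \<mu>] permutes_not_in[OF \<mu>'])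
qed

section \<open>Lexicographic encoding of pairs of naturals\<close>

lemma lex_encode_less_iff:
  fixes A B p q N :: nat
  assumes "p < N" "q < N"
  shows "A * N + p < B * N + q \<longleftrightarrow> A < B \<or> (A = B \<and> p < q)"
proof -
  have "A * N + p < B * N + q" if "A < B"
  proof -
    have "(A + 1) * N \<le> B * N" using that by (intro mult_right_mono) auto
    thus ?thesis using assms by (simp add: algebra_simps)
  qed
  moreover have "B * N + q < A * N + p" if "B < A"
  proof -
    have "(B + 1) * N \<le> A * N" using that by (intro mult_right_mono) auto
    thus ?thesis using assms by (simp add: algebra_simps)
  qed
  ultimately show ?thesis by (metis add_less_cancel_left less_asym nat_neq_iff)
qed

lemma mult_add_eq_cancel:
  fixes a u u' r r' :: nat
  assumes r: "r < a" "r' < a" and eq: "a * u + r = a * u' + r'"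
  shows "u = u'" and "r = r'"
proof -
  have "u = (a * u + r) div a" using r by simp
  also have "\<dots> = u'" using r by (simp only: eq) simp
  finally show "u = u'" .
  have "r = (a * u + r) mod a" using r by simp
  also have "\<dots> = r'" using r by (simp only: eq) simp
  finally show "r = r'" .
qed

section \<open>Compatible sequences\<close>

definition compatible :: "nat \<Rightarrow> (nat \<Rightarrow> nat) \<Rightarrow> nat \<Rightarrow> (nat \<Rightarrow> nat) set" where
  "compatible n p m = {x \<in> {1..n} \<rightarrow>\<^sub>E {..<m}.
     \<forall>i\<in>{1..<n}. x i \<le> x (Suc i) \<and> (p (Suc i) < p i \<longrightarrow> x i < x (Suc i))}"

lemma compatibleI:
  assumes "x \<in> {1..n} \<rightarrow>\<^sub>E {..<m}"
    and "\<And>i. i \<in> {1..<n} \<Longrightarrow> x i \<le> x (Suc i) \<and> (p (Suc i) < p i \<longrightarrow> x i < x (Suc i))"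
  shows "x \<in> compatible n p m"
  using assms unfolding compatible_def by auto

lemma compatible_PiE: "x \<in> compatible n p m \<Longrightarrow> x \<in> {1..n} \<rightarrow>\<^sub>E {..<m}"
  unfolding compatible_def by auto

lemma compatible_less: "x \<in> compatible n p m \<Longrightarrow> k \<in> {1..n} \<Longrightarrow> x k < m"
  using compatible_PiE[of x n p m] by (auto simp: PiE_iff)

lemma compatible_step:
  assumes "x \<in> compatible n p m" "i \<in> {1..<n}"
  shows "x i \<le> x (Suc i)" and "p (Suc i) < p i \<Longrightarrow> x i < x (Suc i)"
  using assms unfolding compatible_def by auto

lemma finite_compatible: "finite (compatible n p m)"
proof (rule finite_subset)
  show "compatible n p m \<subseteq> {1..n} \<rightarrow>\<^sub>E {..<m}" unfolding compatible_def by auto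
  show "finite ({1..n} \<rightarrow>\<^sub>E {..<m})" by (intro finite_PiE) auto
qed

text \<open>For a permutation p, a p-compatible v makes i \<mapsto> (v i, p i) strictly increasing in the
  lexicographic order, encoded here as v i * (n+1) + p i.\<close>
lemma compatible_lex_strict_mono:
  assumes p: "p permutes {1..n}" and v: "v \<in> compatible n p m"
  shows "strict_mono_on {1..n} (\<lambda>k. v k * (n+1) + p k)"
proof (rule strict_mono_onI)
  fix i j assume ij: "i \<in> {1..n}" "j \<in> {1..n}" "i < j"
  show "v i * (n+1) + p i < v j * (n+1) + p j"
  proof (rule lift_Suc_mono_less_ivl[where f = "\<lambda>k. v k * (n+1) + p k" and N = "{1..<n}"])
    fix k assume k: "k \<in> {1..<n}"
    have "p k \<noteq> p (Suc k)" using injD[OF permutes_inj[OF p], of k "Suc k"] by auto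
    moreover have "p k \<in> {1..n}" "p (Suc k) \<in> {1..n}" using permutes_mem[OF p] k by auto
    ultimately show "v k * (n+1) + p k < v (Suc k) * (n+1) + p (Suc k)"
      using compatible_step[OF v k] lex_encode_less_iff[of "p k" "n+1" "p (Suc k)" "v k" "v (Suc k)"]
      by auto
  qed (use ij in auto)
qed

section \<open>Counting compatible sequences\<close>

definition nondescents_before :: "(nat \<Rightarrow> nat) \<Rightarrow> nat \<Rightarrow> nat" where
  "nondescents_before p i = card {k\<in>{1..<i}. \<not> p (Suc k) < p k}"

lemma nondescents_before_Suc:
  assumes "1 \<le> i"
  shows "nondescents_before p (Suc i) =
           nondescents_before p i + (if p (Suc i) < p i then 0 else 1)"
proof -
  have "{k\<in>{1..<Suc i}. \<not> p (Suc k) < p k} =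
        insert i {k\<in>{1..<i}. \<not> p (Suc k) < p k}" if "\<not> p (Suc i) < p i"
    using that assms by auto
  moreover have "{k\<in>{1..<Suc i}. \<not> p (Suc k) < p k} = {k\<in>{1..<i}. \<not> p (Suc k) < p k}"
    if "p (Suc i) < p i"
    using that by (auto simp: less_Suc_eq)
  ultimately show ?thesis unfolding nondescents_before_def by auto
qed

lemma nondescents_before_le: "nondescents_before p i \<le> i - 1"
proof -
  have "nondescents_before p i \<le> card {1..<i}"
    unfolding nondescents_before_def by (intro card_mono) auto
  thus ?thesis by simp
qed

lemma nondescents_before_last:
  assumes "1 \<le> n"
  shows "nondescents_before p n = n - 1 - des n p"
proof -
  let ?D = "{k\<in>{1..<n}. p (Suc k) < p k}"
  have "{k\<in>{1..<n}. \<not> p (Suc k) < p k} = {1..<n} - ?D" by auto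
  moreover have "{1..n-1} = {1..<n}" using assms by auto
  moreover have "card ({1..<n} - ?D) = card {1..<n} - card ?D" by (rule card_Diff_subset) auto
  ultimately show ?thesis unfolding nondescents_before_def des_def by simp
qed

text \<open>Adding to x i the number of non-descents of p before position i turns a compatible
  sequence into a strictly increasing one; its set of values is an n-subset, and this is the
  stars-and-bars bijection.\<close>
definition spread :: "nat \<Rightarrow> (nat \<Rightarrow> nat) \<Rightarrow> (nat \<Rightarrow> nat) \<Rightarrow> nat set" where
  "spread n p x = (\<lambda>i. x i + nondescents_before p i) ` {1..n}"

lemma spread_strict_mono:
  assumes x: "x \<in> compatible n p m"
  shows "strict_mono_on {1..n} (\<lambda>i. x i + nondescents_before p i)"
proof (rule strict_mono_onI)
  fix i j assume ij: "i \<in> {1..n}" "j \<in> {1..n}" "i < j"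
  show "x i + nondescents_before p i < x j + nondescents_before p j"
  proof (rule lift_Suc_mono_less_ivl[where f = "\<lambda>i. x i + nondescents_before p i" and N = "{1..<n}"])
    fix k assume k: "k \<in> {1..<n}"
    thus "x k + nondescents_before p k < x (Suc k) + nondescents_before p (Suc k)"
      using compatible_step[OF x k] nondescents_before_Suc[of k p] by auto
  qed (use ij in auto)
qed

lemma spread_inj: "inj_on (spread n p) (compatible n p m)"
proof (rule inj_onI)
  fix x x' assume x: "x \<in> compatible n p m" and x': "x' \<in> compatible n p m"
    and eq: "spread n p x = spread n p x'"
  show "x = x'"
  proof (rule PiE_ext[OF compatible_PiE[OF x] compatible_PiE[OF x']])
    fix i assume "i \<in> {1..n}"
    with eq show "x i = x' i"
      using strict_mono_on_image_eq[OF _ spread_strict_mono[OF x] spread_strict_mono[OF x']]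
      unfolding spread_def by auto
  qed
qed

lemma spread_subset:
  assumes n: "1 \<le> n" and x: "x \<in> compatible n p m"
  shows "spread n p x \<subseteq> {..<m + nondescents_before p n}" and "card (spread n p x) = n"
proof -
  let ?z = "\<lambda>i. x i + nondescents_before p i"
  have mono: "strict_mono_on {1..n} ?z" by (rule spread_strict_mono[OF x])
  show "card (spread n p x) = n"
    unfolding spread_def using card_image[OF strict_mono_on_imp_inj_on[OF mono]] by simp
  have "?z i < m + nondescents_before p n" if i: "i \<in> {1..n}" for i
  proof -
    have "?z i \<le> ?z n" using strict_mono_on_leD[OF mono i] i n by auto
    thus ?thesis using compatible_less[OF x, of n] n by simp
  qed
  thus "spread n p x \<subseteq> {..<m + nondescents_before p n}" unfolding spread_def by auto
qed

lemma strict_mono_on_lessThan_ge: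
  fixes h :: "nat \<Rightarrow> nat"
  assumes "strict_mono_on {..<N} h" "k < N"
  shows "k \<le> h k"
  using assms(2)
proof (induction k)
  case (Suc k)
  have "h k < h (Suc k)" using strict_mono_onD[OF assms(1)] Suc.prems by simp
  thus ?case using Suc by linarith
qed simp

text \<open>Conversely every n-subset of {..<m + nondescents_before p n} arises: list it increasingly
  as z 1 < ... < z n and subtract the non-descent counts.\<close>
lemma spread_onto:
  assumes n: "1 \<le> n" and B: "B \<subseteq> {..<m + nondescents_before p n}" "card B = n"
  shows "B \<in> spread n p ` compatible n p m"
proof -
  let ?c = "nondescents_before p"
  have "finite B" using B(1) finite_subset by blast
  then obtain h where h: "bij_betw h {..<n} B" "strict_mono_on {..<n} h"
    using ex_bij_betw_strict_mono_card B(2) by metis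
  define z where "z i = h (i - 1)" for i
  define x where "x = restrict (\<lambda>i. z i - ?c i) {1..n}"
  have c_le_z: "?c i \<le> z i" if "i \<in> {1..n}" for i
  proof -
    have "i - 1 \<le> z i" unfolding z_def using strict_mono_on_lessThan_ge[OF h(2), of "i - 1"] that by auto
    thus ?thesis using nondescents_before_le[of p i] by linarith
  qed
  have step: "x i \<le> x (Suc i) \<and> (p (Suc i) < p i \<longrightarrow> x i < x (Suc i))" if i: "i \<in> {1..<n}" for i
  proof -
    have "z i < z (Suc i)" using strict_mono_onD[OF h(2)] i unfolding z_def by auto
    thus ?thesis using c_le_z[of i] c_le_z[of "Suc i"] nondescents_before_Suc[of i p] i
      unfolding x_def by auto
  qed
  have "x n < m"
  proof -
    have "z n \<in> B" using bij_betwE[OF h(1)] n unfolding z_def by auto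
    thus ?thesis using B(1) c_le_z[of n] n unfolding x_def by auto
  qed
  moreover have "x i \<le> x n" if "i \<in> {1..n}" for i
    by (rule lift_Suc_mono_le_ivl[where N = "{1..<n}"]) (use that step in auto)
  ultimately have bound: "x i < m" if "i \<in> {1..n}" for i
    using that le_less_trans by blast
  have "x \<in> compatible n p m"
    by (intro compatibleI step) (use bound in \<open>auto simp: x_def restrict_PiE_iff\<close>)
  moreover have "spread n p x = B"
  proof -
    have "spread n p x = z ` {1..n}" unfolding spread_def x_def using c_le_z by auto
    also have "\<dots> = h ` {..<n}"
      unfolding z_def using image_image[of h "\<lambda>i. i - 1" "{1..n}"] image_pred_atLeastAtMost by simp
    finally show ?thesis using h(1) by (simp add: bij_betw_def)
  qed
  ultimately show ?thesis by blast
qed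

lemma card_compatible:
  assumes "1 \<le> n"
  shows "card (compatible n p m) = (m + (n - 1 - des n p)) choose n"
proof -
  let ?K = "m + nondescents_before p n"
  have "spread n p ` compatible n p m = {B. B \<subseteq> {..<?K} \<and> card B = n}"
    using spread_subset[OF assms] spread_onto[OF assms] by blast
  hence "bij_betw (spread n p) (compatible n p m) {B. B \<subseteq> {..<?K} \<and> card B = n}"
    using spread_inj by (simp add: bij_betw_def)
  hence "card (compatible n p m) = card {B. B \<subseteq> {..<?K} \<and> card B = n}"
    by (rule bij_betw_same_card)
  thus ?thesis by (simp add: n_subsets nondescents_before_last[OF assms])
qed

section \<open>Compatible sequences of a product\<close>

definition factorizations :: "nat \<Rightarrow> (nat \<Rightarrow> nat) \<Rightarrow> ((nat \<Rightarrow> nat) \<times> (nat \<Rightarrow> nat)) set" where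
  "factorizations n \<sigma> = {(\<tau>, \<mu>). \<tau> permutes {1..n} \<and> \<mu> permutes {1..n} \<and> \<tau> \<circ> \<mu> = \<sigma>}"

lemma finite_factorizations: "finite (factorizations n \<sigma>)"
proof (rule finite_subset)
  show "factorizations n \<sigma> \<subseteq> {\<tau>. \<tau> permutes {1..n}} \<times> {\<mu>. \<mu> permutes {1..n}}"
    unfolding factorizations_def by auto
qed (simp add: finite_permutations)

text \<open>The main combinatorial fact is
  that this is a bijection onto the sigma-compatible sequences.\<close>
definition merge :: "nat \<Rightarrow> nat \<Rightarrow> (nat \<Rightarrow> nat) \<Rightarrow> (nat \<Rightarrow> nat) \<Rightarrow> (nat \<Rightarrow> nat) \<Rightarrow> nat \<Rightarrow> nat" where
  "merge n a \<mu> v u = restrict (\<lambda>i. a * u i + v (\<mu> i)) {1..n}"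

lemma factor_order_iff:
  assumes \<tau>: "\<tau> permutes {1..n}" and \<mu>: "\<mu> permutes {1..n}" and \<sigma>: "\<tau> \<circ> \<mu> = \<sigma>"
    and v: "v \<in> compatible n \<tau> a" and i: "i \<in> {1..n}" "i' \<in> {1..n}"
  shows "\<mu> i < \<mu> i' \<longleftrightarrow> v (\<mu> i) * (n+1) + \<sigma> i < v (\<mu> i') * (n+1) + \<sigma> i'"
proof -
  have "\<mu> i \<in> {1..n}" "\<mu> i' \<in> {1..n}" using i by (simp_all only: permutes_mem[OF \<mu>])
  moreover have "\<sigma> i = \<tau> (\<mu> i)" "\<sigma> i' = \<tau> (\<mu> i')" using \<sigma> by auto
  ultimately show ?thesis
    using strict_mono_on_less[OF compatible_lex_strict_mono[OF \<tau> v]] by simp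
qed

lemma merge_compatible:
  assumes \<tau>: "\<tau> permutes {1..n}" and \<mu>: "\<mu> permutes {1..n}" and \<sigma>: "\<tau> \<circ> \<mu> = \<sigma>"
    and v: "v \<in> compatible n \<tau> a" and u: "u \<in> compatible n \<mu> b"
  shows "merge n a \<mu> v u \<in> compatible n \<sigma> (a * b)"
proof -
  have v_less: "v (\<mu> i) < a" if "i \<in> {1..n}" for i
    using compatible_less[OF v permutes_mem[OF \<mu> that]] .
  show ?thesis
  proof (rule compatibleI)
    have "a * u i + v (\<mu> i) < a * b" if i: "i \<in> {1..n}" for i
    proof -
      have "a * u i + v (\<mu> i) < a * Suc (u i)" using v_less[OF i] by simp
      also have "\<dots> \<le> a * b" using compatible_less[OF u i] by (intro mult_le_mono2) simp
      finally show ?thesis .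
    qed
    thus "merge n a \<mu> v u \<in> {1..n} \<rightarrow>\<^sub>E {..<a * b}"
      unfolding merge_def by (simp add: restrict_PiE_iff)
  next
    fix i assume i: "i \<in> {1..<n}"
    hence iS: "i \<in> {1..n}" "Suc i \<in> {1..n}" by auto
    have "a * u i + v (\<mu> i) \<le> a * u (Suc i) + v (\<mu> (Suc i)) \<and>
          (\<sigma> (Suc i) < \<sigma> i \<longrightarrow> a * u i + v (\<mu> i) < a * u (Suc i) + v (\<mu> (Suc i)))"
    proof (cases "u i < u (Suc i)")
      case True
      have "a * u i + v (\<mu> i) < a * Suc (u i)" using v_less[OF iS(1)] by simp
      also have "\<dots> \<le> a * u (Suc i)" using True by (intro mult_le_mono2) simp
      finally show ?thesis by linarith
    next
      case False
      hence u_eq: "u i = u (Suc i)" using compatible_step(1)[OF u i] by linarith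
      hence "\<not> \<mu> (Suc i) < \<mu> i" using compatible_step(2)[OF u i] by linarith
      moreover have "\<mu> i \<noteq> \<mu> (Suc i)" using injD[OF permutes_inj[OF \<mu>], of i "Suc i"] by auto
      ultimately have "\<mu> i < \<mu> (Suc i)" by linarith
      hence "v (\<mu> i) * (n+1) + \<sigma> i < v (\<mu> (Suc i)) * (n+1) + \<sigma> (Suc i)"
        using factor_order_iff[OF \<tau> \<mu> \<sigma> v iS] by simp
      moreover have "\<sigma> i < n+1" "\<sigma> (Suc i) < n+1"
        using permutes_mem[OF permutes_compose[OF \<mu> \<tau>]] iS \<sigma> by fastforce+
      ultimately show ?thesis
        using u_eq lex_encode_less_iff[of "\<sigma> i" "n+1" "\<sigma> (Suc i)" "v (\<mu> i)" "v (\<mu> (Suc i))"]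
        by auto
    qed
    thus "merge n a \<mu> v u i \<le> merge n a \<mu> v u (Suc i) \<and>
          (\<sigma> (Suc i) < \<sigma> i \<longrightarrow> merge n a \<mu> v u i < merge n a \<mu> v u (Suc i))"
      using iS by (simp add: merge_def)
  qed
qed

lemma factorizationsD:
  assumes "(\<tau>, \<mu>) \<in> factorizations n \<sigma>"
  shows "\<tau> permutes {1..n}" "\<mu> permutes {1..n}" "\<tau> \<circ> \<mu> = \<sigma>"
  using assms unfolding factorizations_def by auto

text \<open>Merging is injective: u and v (mu i) are recovered as quotient and remainder modulo a,
  and then mu as the permutation ordered like the labels (v (mu i), sigma i).\<close>
lemma merge_inj:
  assumes f: "(\<tau>, \<mu>) \<in> factorizations n \<sigma>" and f': "(\<tau>', \<mu>') \<in> factorizations n \<sigma>"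
    and v: "v \<in> compatible n \<tau> a" and u: "u \<in> compatible n \<mu> b"
    and v': "v' \<in> compatible n \<tau>' a" and u': "u' \<in> compatible n \<mu>' b"
    and eq: "merge n a \<mu> v u = merge n a \<mu>' v' u'"
  shows "\<tau> = \<tau>' \<and> \<mu> = \<mu>' \<and> v = v' \<and> u = u'"
proof -
  note \<tau> = factorizationsD[OF f] and \<tau>' = factorizationsD[OF f']
  have parts: "u i = u' i \<and> v (\<mu> i) = v' (\<mu>' i)" if i: "i \<in> {1..n}" for i
  proof -
    have "a * u i + v (\<mu> i) = a * u' i + v' (\<mu>' i)"
      using fun_cong[OF eq, of i] i by (simp add: merge_def)
    moreover have "v (\<mu> i) < a" "v' (\<mu>' i) < a"
      using compatible_less[OF v permutes_mem[OF \<tau>(2) i]]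
        compatible_less[OF v' permutes_mem[OF \<tau>'(2) i]] .
    ultimately show ?thesis using mult_add_eq_cancel by blast
  qed
  have \<mu>_eq: "\<mu> = \<mu>'"
  proof (rule order_permutation_unique[OF \<tau>(2) \<tau>'(2)])
    fix i i' assume i: "i \<in> {1..n}" "i' \<in> {1..n}"
    show "\<mu> i < \<mu> i' \<longleftrightarrow> v (\<mu> i) * (n+1) + \<sigma> i < v (\<mu> i') * (n+1) + \<sigma> i'"
      by (rule factor_order_iff[OF \<tau> v i])
    show "\<mu>' i < \<mu>' i' \<longleftrightarrow> v (\<mu> i) * (n+1) + \<sigma> i < v (\<mu> i') * (n+1) + \<sigma> i'"
      using factor_order_iff[OF \<tau>' v' i] parts i by simp
  qed
  have "\<tau> = \<sigma> \<circ> inv \<mu>"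
    unfolding \<tau>(3)[symmetric] comp_assoc permutes_inv_o(1)[OF \<tau>(2)] by simp
  moreover have "\<tau>' = \<sigma> \<circ> inv \<mu>"
    unfolding \<mu>_eq \<tau>'(3)[symmetric] comp_assoc permutes_inv_o(1)[OF \<tau>'(2)] by simp
  ultimately have "\<tau> = \<tau>'" by simp
  moreover have "u = u'"
    by (rule PiE_ext[OF compatible_PiE[OF u] compatible_PiE[OF u']]) (use parts in auto)
  moreover have "v = v'"
  proof (rule PiE_ext[OF compatible_PiE[OF v] compatible_PiE[OF v']])
    fix k assume "k \<in> {1..n}"
    hence "inv \<mu> k \<in> {1..n}" using permutes_mem[OF permutes_inv[OF \<tau>(2)]] by blast
    moreover have "\<mu> (inv \<mu> k) = k" by (rule permutes_inverses(1)[OF \<tau>(2)])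
    ultimately show "v k = v' k" using parts[of "inv \<mu> k"] \<mu>_eq by simp
  qed
  ultimately show ?thesis using \<mu>_eq by simp
qed

text \<open>For surjectivity, split a sigma-compatible x into quotients and remainders modulo a, and
  let mu be the permutation ordered like the labels (x i mod a, sigma i).\<close>
lemma quotient_compatible:
  assumes x: "x \<in> compatible n \<sigma> (a * b)" and \<sigma>: "\<sigma> permutes {1..n}"
    and iso: "\<And>i i'. i \<in> {1..n} \<Longrightarrow> i' \<in> {1..n} \<Longrightarrow>
       \<mu> i < \<mu> i' \<longleftrightarrow> (x i mod a) * (n+1) + \<sigma> i < (x i' mod a) * (n+1) + \<sigma> i'"
  shows "restrict (\<lambda>i. x i div a) {1..n} \<in> compatible n \<mu> b"
proof (rule compatibleI)
  have "x i div a < b" if "i \<in> {1..n}" for i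
    using compatible_less[OF x that] by (simp add: less_mult_imp_div_less mult.commute)
  thus "restrict (\<lambda>i. x i div a) {1..n} \<in> {1..n} \<rightarrow>\<^sub>E {..<b}" by (simp add: restrict_PiE_iff)
next
  fix i assume i: "i \<in> {1..<n}"
  hence iS: "i \<in> {1..n}" "Suc i \<in> {1..n}" by auto
  have le: "x i \<le> x (Suc i)" by (rule compatible_step(1)[OF x i])
  have "x i div a < x (Suc i) div a" if desc: "\<mu> (Suc i) < \<mu> i"
  proof (rule ccontr)
    assume "\<not> x i div a < x (Suc i) div a"
    hence q: "x i div a = x (Suc i) div a" using div_le_mono[OF le, of a] by linarith
    have "x i div a * a + x i mod a \<le> x (Suc i) div a * a + x (Suc i) mod a"
      using le by (simp only: div_mult_mod_eq)
    hence "x i mod a \<le> x (Suc i) mod a" unfolding q by (rule add_le_imp_le_left)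
    moreover have "\<sigma> i < n+1" "\<sigma> (Suc i) < n+1" using permutes_mem[OF \<sigma>] iS by fastforce+
    ultimately have "x i mod a = x (Suc i) mod a" "\<sigma> (Suc i) < \<sigma> i"
      using iso[OF iS(2) iS(1)] desc
        lex_encode_less_iff[of "\<sigma> (Suc i)" "n+1" "\<sigma> i" "x (Suc i) mod a" "x i mod a"] by auto
    moreover from this(1) q have "x i = x (Suc i)" by (metis div_mult_mod_eq)
    ultimately show False using compatible_step(2)[OF x i] by simp
  qed
  thus "restrict (\<lambda>i. x i div a) {1..n} i \<le> restrict (\<lambda>i. x i div a) {1..n} (Suc i) \<and>
        (\<mu> (Suc i) < \<mu> i \<longrightarrow> restrict (\<lambda>i. x i div a) {1..n} i < restrict (\<lambda>i. x i div a) {1..n} (Suc i))"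
    using iS div_le_mono[OF le, of a] by simp
qed

lemma remainder_compatible:
  assumes \<sigma>: "\<sigma> permutes {1..n}" and \<mu>: "\<mu> permutes {1..n}" and a: "0 < a"
    and iso: "\<And>i i'. i \<in> {1..n} \<Longrightarrow> i' \<in> {1..n} \<Longrightarrow>
       \<mu> i < \<mu> i' \<longleftrightarrow> (x i mod a) * (n+1) + \<sigma> i < (x i' mod a) * (n+1) + \<sigma> i'"
  shows "restrict (\<lambda>k. x (inv \<mu> k) mod a) {1..n} \<in> compatible n (\<sigma> \<circ> inv \<mu>) a"
proof (rule compatibleI)
  show "restrict (\<lambda>k. x (inv \<mu> k) mod a) {1..n} \<in> {1..n} \<rightarrow>\<^sub>E {..<a}"
    using a by (simp add: restrict_PiE_iff)
next
  fix k assume k: "k \<in> {1..<n}"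
  define i i' where "i = inv \<mu> k" and "i' = inv \<mu> (Suc k)"
  have iS: "i \<in> {1..n}" "i' \<in> {1..n}"
    using k permutes_mem[OF permutes_inv[OF \<mu>]] unfolding i_def i'_def by auto
  have "\<mu> i < \<mu> i'" unfolding i_def i'_def using permutes_inverses(1)[OF \<mu>] by simp
  moreover have "\<sigma> i < n+1" "\<sigma> i' < n+1" using permutes_mem[OF \<sigma>] iS by fastforce+
  ultimately have "x i mod a \<le> x i' mod a \<and> (x i mod a = x i' mod a \<longrightarrow> \<sigma> i < \<sigma> i')"
    using iso[OF iS] lex_encode_less_iff[of "\<sigma> i" "n+1" "\<sigma> i'" "x i mod a" "x i' mod a"] by auto
  thus "restrict (\<lambda>k. x (inv \<mu> k) mod a) {1..n} k \<le> restrict (\<lambda>k. x (inv \<mu> k) mod a) {1..n} (Suc k) \<and>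
        ((\<sigma> \<circ> inv \<mu>) (Suc k) < (\<sigma> \<circ> inv \<mu>) k \<longrightarrow>
         restrict (\<lambda>k. x (inv \<mu> k) mod a) {1..n} k < restrict (\<lambda>k. x (inv \<mu> k) mod a) {1..n} (Suc k))"
    using k unfolding i_def i'_def by auto
qed

lemma merge_onto:
  assumes \<sigma>: "\<sigma> permutes {1..n}" and x: "x \<in> compatible n \<sigma> (a * b)" and n: "1 \<le> n"
  obtains \<tau> \<mu> v u where "(\<tau>, \<mu>) \<in> factorizations n \<sigma>"
    and "v \<in> compatible n \<tau> a" "u \<in> compatible n \<mu> b" "x = merge n a \<mu> v u"
proof -
  have "x 1 < a * b" using compatible_less[OF x] n by simp
  hence a: "0 < a" by (cases a) auto
  define l where "l i = (x i mod a) * (n+1) + \<sigma> i" for i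
  have "inj_on l {1..n}"
  proof (rule inj_onI)
    fix i i' assume i: "i \<in> {1..n}" "i' \<in> {1..n}" and "l i = l i'"
    moreover have "\<sigma> i < n+1" "\<sigma> i' < n+1" using permutes_mem[OF \<sigma>] i by fastforce+
    ultimately have "\<sigma> i = \<sigma> i'"
      using mult_add_eq_cancel(2)[of "\<sigma> i" "n+1" "\<sigma> i'" "x i mod a" "x i' mod a"]
      unfolding l_def by (simp add: mult.commute)
    thus "i = i'" using injD[OF permutes_inj[OF \<sigma>]] by blast
  qed
  then obtain \<mu> where \<mu>: "\<mu> permutes {1..n}"
    and iso: "\<And>i i'. i \<in> {1..n} \<Longrightarrow> i' \<in> {1..n} \<Longrightarrow> \<mu> i < \<mu> i' \<longleftrightarrow> l i < l i'"
    by (rule order_permutation_exists) blast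
  define \<tau> where "\<tau> = \<sigma> \<circ> inv \<mu>"
  define u where "u = restrict (\<lambda>i. x i div a) {1..n}"
  define v where "v = restrict (\<lambda>k. x (inv \<mu> k) mod a) {1..n}"
  have "(\<tau>, \<mu>) \<in> factorizations n \<sigma>"
    using permutes_compose[OF permutes_inv[OF \<mu>] \<sigma>] permutes_inv_o(2)[OF \<mu>] \<mu>
    unfolding factorizations_def \<tau>_def by (simp add: comp_assoc)
  moreover have "u \<in> compatible n \<mu> b"
    unfolding u_def using quotient_compatible[OF x \<sigma>] iso unfolding l_def by blast
  moreover have "v \<in> compatible n \<tau> a"
    unfolding v_def \<tau>_def using remainder_compatible[OF \<sigma> \<mu> a] iso unfolding l_def by blast
  moreover have "x = merge n a \<mu> v u"
  proof
    fix i show "x i = merge n a \<mu> v u i"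
    proof (cases "i \<in> {1..n}")
      case True
      hence "v (\<mu> i) = x i mod a"
        using permutes_mem[OF \<mu> True] permutes_inverses(2)[OF \<mu>] by (simp add: v_def)
      thus ?thesis using True by (simp add: merge_def u_def)
    next
      case False
      thus ?thesis using PiE_arb[OF compatible_PiE[OF x] False] by (auto simp: merge_def)
    qed
  qed
  ultimately show ?thesis using that by blast
qed

lemma card_compatible_mult:
  assumes \<sigma>: "\<sigma> permutes {1..n}" and n: "1 \<le> n"
  shows "card (compatible n \<sigma> (a * b)) =
    (\<Sum>(\<tau>, \<mu>)\<in>factorizations n \<sigma>. card (compatible n \<tau> a) * card (compatible n \<mu> b))"
proof -
  define T where "T = (SIGMA (\<tau>, \<mu>):factorizations n \<sigma>. compatible n \<tau> a \<times> compatible n \<mu> b)"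
  define F where "F = (\<lambda>((\<tau> :: nat \<Rightarrow> nat, \<mu>), (v, u)). merge n a \<mu> v u)"
  have "inj_on F T"
  proof (rule inj_onI)
    fix z z' assume "z \<in> T" "z' \<in> T" "F z = F z'"
    thus "z = z'" unfolding F_def T_def by (auto dest: merge_inj)
  qed
  moreover have "F ` T = compatible n \<sigma> (a * b)"
  proof (intro equalityI subsetI)
    fix x assume "x \<in> F ` T"
    thus "x \<in> compatible n \<sigma> (a * b)"
      unfolding F_def T_def by (auto dest: factorizationsD intro: merge_compatible)
  next
    fix x assume "x \<in> compatible n \<sigma> (a * b)"
    then obtain \<tau> \<mu> v u where "(\<tau>, \<mu>) \<in> factorizations n \<sigma>"
      "v \<in> compatible n \<tau> a" "u \<in> compatible n \<mu> b" "x = merge n a \<mu> v u"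
      using merge_onto[OF \<sigma> _ n] by metis
    thus "x \<in> F ` T" unfolding F_def T_def by force
  qed
  ultimately have "card (compatible n \<sigma> (a * b)) = card T"
    by (metis bij_betw_def bij_betw_same_card)
  also have "\<dots> = (\<Sum>(\<tau>, \<mu>)\<in>factorizations n \<sigma>. card (compatible n \<tau> a \<times> compatible n \<mu> b))"
    unfolding T_def using finite_factorizations finite_compatible
    by (subst card_SigmaI) (auto simp: case_prod_beta)
  finally show ?thesis by (simp add: card_cartesian_product case_prod_beta)
qed

section \<open>Generating functions\<close>

lemma des_le: "des n p \<le> n - 1"
proof -
  have "des n p \<le> card {1..n-1}" unfolding des_def by (intro card_mono) auto
  thus ?thesis by simp
qed

lemma binom_of_nat: "binom (int N) k = int (N choose k)"
  by (simp add: binom_def binomial_eq_0)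

lemma binom_card_compatible:
  assumes "1 \<le> n"
  shows "binom (int m + int n - int (des n p) - 1) n = int (card (compatible n p m))"
proof -
  have "int m + int n - int (des n p) - 1 = int (m + (n - 1 - des n p))"
    using des_le[of n p] assms by linarith
  thus ?thesis by (simp only: card_compatible[OF assms] binom_of_nat)
qed

definition descent_series :: "nat \<Rightarrow> nat \<Rightarrow> real fps" where
  "descent_series n k = Abs_fps (\<lambda>a. of_int (binom (int a + int n - int k - 1) n))"

lemma descent_series_mult: "descent_series n k * (1 - fps_X) ^ (n+1) = fps_X ^ (k+1)"
proof -
  have inv: "inverse ((1 - fps_X) ^ (n+1) :: real fps) = Abs_fps (\<lambda>j. of_nat ((n + j) choose j))"
    using one_minus_const_fps_X_neg_power'[of "n+1" "1::real"] by simp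
  have "descent_series n k = fps_X ^ (k+1) * inverse ((1 - fps_X) ^ (n+1))"
  proof (rule fps_ext)
    fix a
    show "fps_nth (descent_series n k) a = fps_nth (fps_X ^ (k+1) * inverse ((1 - fps_X) ^ (n+1))) a"
    proof (cases "a < k + 1")
      case True
      thus ?thesis unfolding descent_series_def fps_X_power_mult_nth binom_def by auto
    next
      case False
      hence "int a + int n - int k - 1 = int (n + (a - (k+1)))" by linarith
      hence "binom (int a + int n - int k - 1) n = int ((n + (a - (k+1))) choose (a - (k+1)))"
        by (simp only: binom_of_nat binomial_symmetric[of n "n + (a - (k+1))"]) simp
      thus ?thesis using False unfolding descent_series_def fps_X_power_mult_nth inv by simp
    qed
  qed
  moreover have "inverse ((1 - fps_X) ^ (n+1) :: real fps) * (1 - fps_X) ^ (n+1) = 1"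
    by (rule inverse_mult_eq_1) (simp add: fps_power_zeroth)
  ultimately show ?thesis by (simp add: mult.assoc)
qed

text \<open>Embedding of univariate series into the bivariate ring as series in s; series in t are
  embedded by fps_const.\<close>
definition fps_in_s :: "real fps \<Rightarrow> real fps fps" where
  "fps_in_s F = Abs_fps (\<lambda>a. fps_const (fps_nth F a))"

lemma fps_const_sum: "fps_const (\<Sum>i\<in>A. f i) = (\<Sum>i\<in>A. fps_const (f i) :: 'a::comm_ring_1 fps)"
  by (rule fps_ext) (simp add: fps_sum_nth)

lemma fps_in_s_one: "fps_in_s 1 = 1"
  by (rule fps_ext) (simp add: fps_in_s_def)

lemma fps_in_s_X: "fps_in_s fps_X = fps_s"
  by (rule fps_ext) (simp add: fps_in_s_def fps_s_def)

lemma fps_in_s_diff: "fps_in_s (F - G) = fps_in_s F - fps_in_s G"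
  by (rule fps_ext) (simp add: fps_in_s_def)

lemma fps_in_s_mult: "fps_in_s (F * G) = fps_in_s F * fps_in_s G"
  by (rule fps_ext) (simp add: fps_in_s_def fps_mult_nth fps_const_sum)

lemma fps_in_s_power: "fps_in_s (F ^ k) = fps_in_s F ^ k"
  by (induction k) (simp_all add: fps_in_s_one fps_in_s_mult)

lemma descent_series_s: "fps_in_s (descent_series n k) * (1 - fps_s) ^ (n+1) = fps_s ^ (k+1)"
  using arg_cong[OF descent_series_mult[of n k], of fps_in_s]
  by (simp only: fps_in_s_mult fps_in_s_power fps_in_s_diff fps_in_s_one fps_in_s_X)

lemma descent_series_t: "fps_const (descent_series n k) * (1 - fps_t) ^ (n+1) = fps_t ^ (k+1)"
proof -
  have "(1 - fps_t) ^ (n+1) = fps_const ((1 - fps_X) ^ (n+1))"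
    unfolding fps_t_def by (simp flip: fps_const_1_eq_1)
  thus ?thesis using descent_series_mult[of n k] unfolding fps_t_def by simp
qed

lemma rhs_as_sum_over_factorizations:
  assumes n: "1 \<le> n" and \<sigma>: "\<sigma> permutes {1..n}"
  shows "Abs_fps (\<lambda>a. Abs_fps (\<lambda>b. of_int (binom (int n + int a * int b - int (des n \<sigma>) - 1) n)))
       = (\<Sum>(\<tau>, \<mu>)\<in>factorizations n \<sigma>.
            fps_in_s (descent_series n (des n \<tau>)) * fps_const (descent_series n (des n \<mu>)))"
proof (rule fps_ext, rule fps_ext)
  fix a b
  have coeff: "fps_nth (descent_series n (des n p)) m = real (card (compatible n p m))" for p m
    unfolding descent_series_def using binom_card_compatible[OF n, of m p] by simp
  have "of_int (binom (int n + int a * int b - int (des n \<sigma>) - 1) n)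
      = real (card (compatible n \<sigma> (a * b)))"
    using binom_card_compatible[OF n, of "a * b" \<sigma>] by (simp add: algebra_simps)
  also have "\<dots> = (\<Sum>(\<tau>, \<mu>)\<in>factorizations n \<sigma>.
                   real (card (compatible n \<tau> a)) * real (card (compatible n \<mu> b)))"
    unfolding card_compatible_mult[OF \<sigma> n] by (simp add: case_prod_beta)
  finally show "fps_nth (fps_nth (Abs_fps (\<lambda>a. Abs_fps (\<lambda>b.
      of_int (binom (int n + int a * int b - int (des n \<sigma>) - 1) n)))) a) b
    = fps_nth (fps_nth (\<Sum>(\<tau>, \<mu>)\<in>factorizations n \<sigma>.
         fps_in_s (descent_series n (des n \<tau>)) * fps_const (descent_series n (des n \<mu>))) a) b"
    by (simp add: fps_sum_nth fps_in_s_def coeff case_prod_beta)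
qed

lemma sum_card_fibres:
  fixes f :: "nat \<Rightarrow> nat \<Rightarrow> 'a::comm_ring_1"
  assumes fin: "finite P" and bound: "\<And>p. p \<in> P \<Longrightarrow> g p \<le> n \<and> h p \<le> n"
  shows "(\<Sum>i\<le>n. \<Sum>j\<le>n. of_nat (card {p\<in>P. g p = i \<and> h p = j}) * f i j) = (\<Sum>p\<in>P. f (g p) (h p))"
proof -
  let ?e = "\<lambda>p i j. if g p = i \<and> h p = j then f i j else 0"
  have "of_nat (card {p\<in>P. g p = i \<and> h p = j}) * f i j = (\<Sum>p\<in>P. ?e p i j)" for i j
    using sum.inter_filter[OF fin, of "\<lambda>_. f i j" "\<lambda>p. g p = i \<and> h p = j"] by simp
  hence "(\<Sum>i\<le>n. \<Sum>j\<le>n. of_nat (card {p\<in>P. g p = i \<and> h p = j}) * f i j)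
      = (\<Sum>i\<le>n. \<Sum>j\<le>n. \<Sum>p\<in>P. ?e p i j)" by simp
  also have "\<dots> = (\<Sum>i\<le>n. \<Sum>p\<in>P. \<Sum>j\<le>n. ?e p i j)"
    by (intro sum.cong refl sum.swap)
  also have "\<dots> = (\<Sum>p\<in>P. \<Sum>i\<le>n. \<Sum>j\<le>n. ?e p i j)"
    by (rule sum.swap)
  also have "\<dots> = (\<Sum>p\<in>P. f (g p) (h p))"
  proof (rule sum.cong[OF refl])
    fix p assume p: "p \<in> P"
    have "(\<Sum>i\<le>n. \<Sum>j\<le>n. ?e p i j) = (\<Sum>i\<le>n. if i = g p then f i (h p) else 0)"
      using bound[OF p] by (intro sum.cong refl) (auto simp: sum.delta)
    also have "\<dots> = f (g p) (h p)" using bound[OF p] by (simp add: sum.delta)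
    finally show "(\<Sum>i\<le>n. \<Sum>j\<le>n. ?e p i j) = f (g p) (h p)" .
  qed
  finally show ?thesis .
qed

lemma cnt_factorizations:
  "cnt n \<sigma> i j = card {p\<in>factorizations n \<sigma>. des n (fst p) = i \<and> des n (snd p) = j}"
  unfolding cnt_def factorizations_def by (rule arg_cong[where f = card]) auto

lemma fps_mult_inverse:
  fixes F :: "'a::{ring_1,inverse} fps"
  assumes "fps_nth F 0 * inverse (fps_nth F 0) = 1"
  shows "F * inverse F = 1"
  unfolding fps_inverse_def using fps_right_inverse[OF assms] .

lemma denominators_invertible:
  "(1 - fps_s) ^ k * inverse ((1 - fps_s) ^ k) = 1"
  "(1 - fps_t) ^ k * inverse ((1 - fps_t) ^ k) = 1"
proof -
  show "(1 - fps_s) ^ k * inverse ((1 - fps_s) ^ k) = 1"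
    by (rule fps_mult_inverse) (simp add: fps_power_zeroth fps_s_def)
  show "(1 - fps_t) ^ k * inverse ((1 - fps_t) ^ k) = 1"
  proof (rule fps_mult_inverse)
    have "fps_nth ((1 - fps_t) ^ k) 0 = (1 - fps_X) ^ k" by (simp add: fps_power_zeroth fps_t_def)
    thus "fps_nth ((1 - fps_t) ^ k) 0 * inverse (fps_nth ((1 - fps_t) ^ k) 0) = 1"
      by (simp add: inverse_mult_eq_1' fps_power_zeroth)
  qed
qed

text \<open>Both sides are expanded over the factorizations sigma = tau o mu: on the left, every
  factorization contributes s^(des tau + 1) t^(des mu + 1); on the right, by the product
  decomposition, it contributes the product of the two descent series, which equals the former
  after multiplication with (1 - s)^(n+1) (1 - t)^(n+1).\<close>
lemma numerator_expansion:
  assumes n: "1 \<le> n" and \<sigma>: "\<sigma> permutes {1..n}"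
  shows "(\<Sum>i\<le>n. \<Sum>j\<le>n. of_nat (cnt n \<sigma> i j) * fps_s ^ (i+1) * fps_t ^ (j+1))
    = Abs_fps (\<lambda>a. Abs_fps (\<lambda>b. of_int (binom (int n + int a * int b - int (des n \<sigma>) - 1) n)))
      * ((1 - fps_s) ^ (n+1) * (1 - fps_t) ^ (n+1))"
    (is "_ = ?R * (?A * ?B)")
proof -
  let ?S = "\<lambda>k. fps_in_s (descent_series n k)" and ?T = "\<lambda>k. fps_const (descent_series n k)"
  have "(\<Sum>i\<le>n. \<Sum>j\<le>n. of_nat (cnt n \<sigma> i j) * fps_s ^ (i+1) * fps_t ^ (j+1))
      = (\<Sum>p\<in>factorizations n \<sigma>. fps_s ^ (des n (fst p) + 1) * fps_t ^ (des n (snd p) + 1))"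
    unfolding cnt_factorizations mult.assoc
    by (rule sum_card_fibres[OF finite_factorizations]) (meson des_le diff_le_self order_trans)
  also have "\<dots> = (\<Sum>p\<in>factorizations n \<sigma>. (?S (des n (fst p)) * ?A) * (?T (des n (snd p)) * ?B))"
    by (simp only: descent_series_s descent_series_t)
  also have "\<dots> = (\<Sum>p\<in>factorizations n \<sigma>. ?S (des n (fst p)) * ?T (des n (snd p)) * (?A * ?B))"
    by (rule sum.cong[OF refl]) (simp only: ac_simps)
  also have "\<dots> = (\<Sum>p\<in>factorizations n \<sigma>. ?S (des n (fst p)) * ?T (des n (snd p))) * (?A * ?B)"
    by (rule sum_distrib_right[symmetric])
  also have "\<dots> = ?R * (?A * ?B)"
    using rhs_as_sum_over_factorizations[OF n \<sigma>] by (simp add: split_def)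
  finally show ?thesis .
qed

theorem proposition2p1:
  fixes n d :: nat and \<sigma> :: "nat \<Rightarrow> nat"
  assumes "n \<ge> 1" and "\<sigma> permutes {1..n}" and "des n \<sigma> = d"
  shows "(\<Sum>i\<le>n. \<Sum>j\<le>n. of_nat (cnt n \<sigma> i j) * fps_s ^ (i+1) * fps_t ^ (j+1))
            * inverse ((1 - fps_s) ^ (n+1)) * inverse ((1 - fps_t) ^ (n+1))
         = Abs_fps (\<lambda>a. Abs_fps (\<lambda>b. of_int (binom (int n + int a * int b - int d - 1) n)))"
proof -
  let ?A = "(1 - fps_s) ^ (n+1)" and ?B = "(1 - fps_t) ^ (n+1)"
  let ?R = "Abs_fps (\<lambda>a. Abs_fps (\<lambda>b. of_int (binom (int n + int a * int b - int d - 1) n)))"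
  have "(\<Sum>i\<le>n. \<Sum>j\<le>n. of_nat (cnt n \<sigma> i j) * fps_s ^ (i+1) * fps_t ^ (j+1)) = ?R * (?A * ?B)"
    using numerator_expansion[OF assms(1,2)] assms(3) by (simp only:)
  hence "(\<Sum>i\<le>n. \<Sum>j\<le>n. of_nat (cnt n \<sigma> i j) * fps_s ^ (i+1) * fps_t ^ (j+1))
           * inverse ?A * inverse ?B = ?R * (?A * inverse ?A) * (?B * inverse ?B)"
    by (simp only: ac_simps)
  thus ?thesis by (simp only: denominators_invertible mult_1_right)
qed

end
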